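(* Let $a,b,c$ be positive integers that are not all equal, and let $n=a+b+c$. Let $A=\{1,\dots,a\}$, $B=\{a+1,\dots,a+b\}$ and $C=\{a+b+1,\dots,n\}$. Define the $n\times n$ array $M=(M_{i,j})_{i,j\in[n]}$ of subsets of $[n]$ by \[ M_{i,j}=\begin{cases} A&\text{if } i\in A \text{ and } j\in A,\\ B&\text{if } i\in B \text{ and } j\in B,\\ C&\text{if } i\in C \text{ and } j\in C,\\ \emptyset&\text{otherwise}. \end{cases} \] Let $k\ge 1$ and let $N=(N_{i,j})_{i,j\in[n]}$ be any $(n^2,k)$-array. Then there exist $i,j\in[n]$ with $M_{i,j}\cap N_{i,j}\neq\emptyset$.
   Context: $[n]=\{1,2,\dots,n\}$. For positive integers $n,d,k$, an $(n^d,k)$-array is a $d$-dimensional array of dimensions $n\times n\times\cdots\times n$ such that each entry is a subset of $[n]$ of cardinality exactly $k$, and every number in $[n]$ occurs in exactly $k$ of the entries along any axis-parallel line of the array (an axis-parallel line is the set of $n$ cells obtained by fixing all coordinates but one). In particular an $(n^2,k)$-array is an $n\times n$ array of $k$-subsets of $[n]$ in which each symbol of $[n]$ lies in exactly $k$ entries of each row and exactly $k$ entries of each column. *)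

theory Defs
  imports Main
begin

definition array2 :: "nat \<Rightarrow> nat \<Rightarrow> (nat \<Rightarrow> nat \<Rightarrow> nat set) \<Rightarrow> bool" where
  "array2 n k N \<longleftrightarrow>
     (\<forall>i\<in>{1..n}. \<forall>j\<in>{1..n}. N i j \<subseteq> {1..n} \<and> card (N i j) = k) \<and>
     (\<forall>i\<in>{1..n}. \<forall>s\<in>{1..n}. card {j\<in>{1..n}. s \<in> N i j} = k) \<and>
     (\<forall>j\<in>{1..n}. \<forall>s\<in>{1..n}. card {i\<in>{1..n}. s \<in> N i j} = k)"

definition blockM :: "nat \<Rightarrow> nat \<Rightarrow> nat \<Rightarrow> nat \<Rightarrow> nat \<Rightarrow> nat set" where
  "blockM a b c i j =
     (let A = {1..a}; B = {a+1..a+b}; C = {a+b+1..a+b+c} in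
      if i \<in> A \<and> j \<in> A then A
      else if i \<in> B \<and> j \<in> B then B
      else if i \<in> C \<and> j \<in> C then C
      else {})"

end

theory Submission imports Defs begin

text \<open>Count the triples \<open>((i,j),s)\<close> with \<open>s \<in> N i j\<close>; there are \<open>n\<^sup>2 k\<close> of them. Colour each index by
  its block. For a colour class \<open>S\<close>, the triples with \<open>i,j \<in> S\<close>, those with \<open>i,s \<in> S\<close> and those
  with \<open>j,s \<in> S\<close> each number \<open>|S|\<^sup>2 k\<close>, by the entry, row and column conditions respectively.
  If \<open>M\<close> and \<open>N\<close> were disjoint, no triple would have all three coordinates in one block, so each
  triple is counted at most once in total, giving \<open>3 k (a\<^sup>2 + b\<^sup>2 + c\<^sup>2) \<le> k (a + b + c)\<^sup>2\<close>. This
  contradicts \<open>3 (a\<^sup>2 + b\<^sup>2 + c\<^sup>2) > (a + b + c)\<^sup>2\<close>, valid when \<open>a, b, c\<close> are not all equal.\<close>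

lemma card_Sigma_square_const:
  assumes "finite S" and "\<And>x y. x \<in> S \<Longrightarrow> y \<in> S \<Longrightarrow> finite (F x y) \<and> card (F x y) = k"
  shows "card (SIGMA (x, y):S \<times> S. F x y) = card S ^ 2 * k"
proof -
  have "card (SIGMA (x, y):S \<times> S. F x y) = (\<Sum>(x, y)\<in>S \<times> S. card (F x y))"
    using assms by (subst card_SigmaI) (auto simp: case_prod_unfold)
  also have "\<dots> = (\<Sum>(x, y)\<in>S \<times> S. k)"
    using assms(2) by (intro sum.cong) auto
  finally show ?thesis by (simp add: card_cartesian_product power2_eq_square)
qed

lemma card_triples_entry_pair:
  assumes "finite S" and "\<And>i j. i \<in> S \<Longrightarrow> j \<in> S \<Longrightarrow> finite (N i j) \<and> card (N i j) = k"
  shows "card {((i, j), s). i \<in> S \<and> j \<in> S \<and> s \<in> N i j} = card S ^ 2 * k"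
proof -
  have "{((i, j), s). i \<in> S \<and> j \<in> S \<and> s \<in> N i j} = (SIGMA (i, j):S \<times> S. N i j)"
    by auto
  with card_Sigma_square_const[OF assms] show ?thesis by simp
qed

lemma card_triples_row_pair:
  assumes "finite I" and "S \<subseteq> I"
    and "\<And>i s. i \<in> S \<Longrightarrow> s \<in> S \<Longrightarrow> card {j \<in> I. s \<in> N i j} = k"
  shows "card {((i, j), s). i \<in> S \<and> j \<in> I \<and> s \<in> S \<and> s \<in> N i j} = card S ^ 2 * k"
proof -
  have "bij_betw (\<lambda>((i, s), j). ((i, j), s)) (SIGMA (i, s):S \<times> S. {j \<in> I. s \<in> N i j})
          {((i, j), s). i \<in> S \<and> j \<in> I \<and> s \<in> S \<and> s \<in> N i j}"
    by (rule bij_betw_byWitness[where f' = "\<lambda>((i, j), s). ((i, s), j)"]) auto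
  moreover have "card (SIGMA (i, s):S \<times> S. {j \<in> I. s \<in> N i j}) = card S ^ 2 * k"
    using assms by (intro card_Sigma_square_const) (auto intro: finite_subset)
  ultimately show ?thesis by (simp add: bij_betw_same_card)
qed

lemma card_triples_column_pair:
  assumes "finite I" and "S \<subseteq> I"
    and "\<And>j s. j \<in> S \<Longrightarrow> s \<in> S \<Longrightarrow> card {i \<in> I. s \<in> N i j} = k"
  shows "card {((i, j), s). i \<in> I \<and> j \<in> S \<and> s \<in> S \<and> s \<in> N i j} = card S ^ 2 * k"
proof -
  have "bij_betw (\<lambda>((j, s), i). ((i, j), s)) (SIGMA (j, s):S \<times> S. {i \<in> I. s \<in> N i j})
          {((i, j), s). i \<in> I \<and> j \<in> S \<and> s \<in> S \<and> s \<in> N i j}"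
    by (rule bij_betw_byWitness[where f' = "\<lambda>((i, j), s). ((j, s), i)"]) auto
  moreover have "card (SIGMA (j, s):S \<times> S. {i \<in> I. s \<in> N i j}) = card S ^ 2 * k"
    using assms by (intro card_Sigma_square_const) (auto intro: finite_subset)
  ultimately show ?thesis by (simp add: bij_betw_same_card)
qed

lemma sum_of_bool_same_class:
  assumes "finite K" and "f x \<in> K"
  shows "(\<Sum>X\<in>K. of_bool (f x = X \<and> f y = X)) = (of_bool (f x = f y) :: nat)"
proof -
  have "K \<inter> {X. f x = X \<and> f y = X} = (if f x = f y then {f x} else {})"
    using assms(2) by auto
  with assms(1) show ?thesis by simp
qed

lemma sum_card_colour_classes_squared_le:
  fixes N :: "'a \<Rightarrow> 'a \<Rightarrow> 'a set" and f :: "'a \<Rightarrow> 'c"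
  assumes "finite I" and "finite K" and "f ` I \<subseteq> K"
    and entries: "\<And>i j. i \<in> I \<Longrightarrow> j \<in> I \<Longrightarrow> N i j \<subseteq> I \<and> card (N i j) = k"
    and rows: "\<And>i s. i \<in> I \<Longrightarrow> s \<in> I \<Longrightarrow> card {j \<in> I. s \<in> N i j} = k"
    and columns: "\<And>j s. j \<in> I \<Longrightarrow> s \<in> I \<Longrightarrow> card {i \<in> I. s \<in> N i j} = k"
    and no_monochromatic: "\<And>i j s. i \<in> I \<Longrightarrow> j \<in> I \<Longrightarrow> s \<in> N i j \<Longrightarrow> \<not> (f i = f j \<and> f j = f s)"
  shows "3 * (\<Sum>X\<in>K. card {x \<in> I. f x = X} ^ 2) * k \<le> card I ^ 2 * k"
proof -
  define T where "T = {((i, j), s). i \<in> I \<and> j \<in> I \<and> s \<in> N i j}"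
  define cls where "cls X = {x \<in> I. f x = X}" for X
  have finite_entries: "finite (N i j) \<and> card (N i j) = k" if "i \<in> I" "j \<in> I" for i j
    using entries[OF that] \<open>finite I\<close> finite_subset by blast
  have "finite T"
  proof -
    have "T = (SIGMA (i, j):I \<times> I. N i j)" unfolding T_def by auto
    then show ?thesis using \<open>finite I\<close> finite_entries by auto
  qed
  have card_T: "card T = card I ^ 2 * k"
    unfolding T_def by (rule card_triples_entry_pair[OF \<open>finite I\<close> finite_entries])
  define pairs :: "'c \<Rightarrow> ('a \<times> 'a) \<times> 'a \<Rightarrow> nat" where "pairs X t = (case t of ((i, j), s) \<Rightarrow>
    of_bool (f i = X \<and> f j = X) + of_bool (f i = X \<and> f s = X) + of_bool (f j = X \<and> f s = X))"
    for X t
  have pairs_le_1: "(\<Sum>X\<in>K. pairs X t) \<le> (1 :: nat)" if "t \<in> T" for t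
  proof -
    obtain i j s where t: "t = ((i, j), s)"
      by (metis prod.collapse)
    with that have ijs: "i \<in> I" "j \<in> I" "s \<in> N i j"
      unfolding T_def by auto
    have "f i \<in> K" "f j \<in> K"
      using assms(3) ijs by auto
    then have "(\<Sum>X\<in>K. pairs X t) = of_bool (f i = f j) + of_bool (f i = f s) + of_bool (f j = f s)"
      unfolding t pairs_def prod.case sum.distrib using \<open>finite K\<close> by (simp only: sum_of_bool_same_class)
    with no_monochromatic[OF ijs] show ?thesis by auto
  qed
  have pairs_count: "(\<Sum>t\<in>T. pairs X t) = 3 * (card (cls X) ^ 2 * k)" for X
  proof -
    have "cls X \<subseteq> I" "finite (cls X)" unfolding cls_def using \<open>finite I\<close> by auto
    have "(\<Sum>t\<in>T. pairs X t) =
        card {((i, j), s). i \<in> cls X \<and> j \<in> cls X \<and> s \<in> N i j}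
      + card {((i, j), s). i \<in> cls X \<and> j \<in> I \<and> s \<in> cls X \<and> s \<in> N i j}
      + card {((i, j), s). i \<in> I \<and> j \<in> cls X \<and> s \<in> cls X \<and> s \<in> N i j}"
      using \<open>finite T\<close> entries unfolding pairs_def case_prod_unfold sum.distrib
      by (simp add: T_def cls_def Int_def) (intro arg_cong2[where f = "(+)"] arg_cong[where f = card]; fastforce)
    also have "\<dots> = 3 * (card (cls X) ^ 2 * k)"
    proof -
      have in_I: "x \<in> cls X \<Longrightarrow> x \<in> I" for x
        using \<open>cls X \<subseteq> I\<close> by blast
      have "card {((i, j), s). i \<in> cls X \<and> j \<in> cls X \<and> s \<in> N i j} = card (cls X) ^ 2 * k"
        using \<open>finite (cls X)\<close> finite_entries in_I by (blast intro: card_triples_entry_pair)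
      moreover have "card {((i, j), s). i \<in> cls X \<and> j \<in> I \<and> s \<in> cls X \<and> s \<in> N i j} =
          card (cls X) ^ 2 * k"
        using \<open>finite I\<close> \<open>cls X \<subseteq> I\<close> rows in_I by (blast intro: card_triples_row_pair)
      moreover have "card {((i, j), s). i \<in> I \<and> j \<in> cls X \<and> s \<in> cls X \<and> s \<in> N i j} =
          card (cls X) ^ 2 * k"
        using \<open>finite I\<close> \<open>cls X \<subseteq> I\<close> columns in_I by (blast intro: card_triples_column_pair)
      ultimately show ?thesis by simp
    qed
    finally show ?thesis .
  qed
  have "3 * (\<Sum>X\<in>K. card (cls X) ^ 2) * k = (\<Sum>X\<in>K. \<Sum>t\<in>T. pairs X t)"
    by (simp add: pairs_count sum_distrib_left sum_distrib_right mult.assoc)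
  also have "\<dots> = (\<Sum>t\<in>T. \<Sum>X\<in>K. pairs X t)"
    by (rule sum.swap)
  also have "\<dots> \<le> (\<Sum>t\<in>T. 1)"
    using pairs_le_1 by (rule sum_mono)
  finally show ?thesis by (simp add: card_T cls_def)
qed

lemma square_sum_lt_three_sum_squares:
  fixes a b c :: nat
  assumes "\<not> (a = b \<and> b = c)"
  shows "(a + b + c) ^ 2 < 3 * (a ^ 2 + b ^ 2 + c ^ 2)"
proof -
  have "int (3 * (a ^ 2 + b ^ 2 + c ^ 2)) - int ((a + b + c) ^ 2)
      = (int a - int b) ^ 2 + (int b - int c) ^ 2 + (int c - int a) ^ 2"
    by (simp add: power2_eq_square of_nat_mult of_nat_add) algebra
  moreover have "int a - int b \<noteq> 0 \<or> int b - int c \<noteq> 0"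
    using assms by auto
  then have "(int a - int b) ^ 2 + (int b - int c) ^ 2 + (int c - int a) ^ 2 > 0"
    by (auto simp: add_pos_nonneg add_nonneg_pos)
  ultimately show ?thesis by linarith
qed

definition block_index :: "nat \<Rightarrow> nat \<Rightarrow> nat \<Rightarrow> nat" where
  "block_index a b x = (if x \<le> a then 0 else if x \<le> a + b then 1 else 2)"

lemma block_index_eq_iff:
  "block_index a b x = 0 \<longleftrightarrow> x \<le> a"
  "block_index a b x = 1 \<longleftrightarrow> a < x \<and> x \<le> a + b"
  "block_index a b x = 2 \<longleftrightarrow> a + b < x"
  unfolding block_index_def by auto

lemma mem_blockM_if_same_block:
  assumes "i \<in> {1..a+b+c}" "j \<in> {1..a+b+c}" "s \<in> {1..a+b+c}"
    and "block_index a b i = block_index a b j" "block_index a b j = block_index a b s"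
  shows "s \<in> blockM a b c i j"
proof -
  obtain X where X: "block_index a b i = X" "block_index a b j = X" "block_index a b s = X"
    using assms(4,5) by simp
  consider "X = 0" | "X = 1" | "X = 2"
    unfolding X(1)[symmetric] block_index_def by (cases "i \<le> a"; cases "i \<le> a + b") simp_all
  then show ?thesis
    using assms(1-3) X by cases (auto simp: blockM_def Let_def block_index_eq_iff block_index_eq_iff(2)[unfolded One_nat_def])
qed

lemma sum_card_block_classes_squared:
  "(\<Sum>X\<in>{0,1,2}. card {x \<in> {1..a+b+c}. block_index a b x = X} ^ 2) = a ^ 2 + b ^ 2 + c ^ 2"
proof -
  have "{x \<in> {1..a+b+c}. block_index a b x = 0} = {1..a}"
    "{x \<in> {1..a+b+c}. block_index a b x = 1} = {a+1..a+b}"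
    "{x \<in> {1..a+b+c}. block_index a b x = 2} = {a+b+1..a+b+c}"
    unfolding block_index_def by auto
  then show ?thesis by simp
qed

theorem theorem1:
  fixes a b c k :: nat and N :: "nat \<Rightarrow> nat \<Rightarrow> nat set"
  assumes "a > 0" and "b > 0" and "c > 0"
    and "\<not> (a = b \<and> b = c)"
    and "k \<ge> 1"
    and "array2 (a + b + c) k N"
  shows "\<exists>i\<in>{1..a+b+c}. \<exists>j\<in>{1..a+b+c}. blockM a b c i j \<inter> N i j \<noteq> {}"
proof (rule ccontr)
  assume disjoint: "\<not> ?thesis"
  let ?I = "{1..a+b+c}"
  have entries: "\<And>i j. i \<in> ?I \<Longrightarrow> j \<in> ?I \<Longrightarrow> N i j \<subseteq> ?I \<and> card (N i j) = k"
    and rows: "\<And>i s. i \<in> ?I \<Longrightarrow> s \<in> ?I \<Longrightarrow> card {j \<in> ?I. s \<in> N i j} = k"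
    and columns: "\<And>j s. j \<in> ?I \<Longrightarrow> s \<in> ?I \<Longrightarrow> card {i \<in> ?I. s \<in> N i j} = k"
    using assms(6) unfolding array2_def by auto
  have no_monochromatic: "\<not> (block_index a b i = block_index a b j \<and> block_index a b j = block_index a b s)"
    if "i \<in> ?I" "j \<in> ?I" "s \<in> N i j" for i j s
    using that entries[OF that(1,2)] disjoint mem_blockM_if_same_block by blast
  have "block_index a b ` ?I \<subseteq> {0, 1, 2}"
    unfolding block_index_def by auto
  from sum_card_colour_classes_squared_le[OF _ _ this entries rows columns no_monochromatic]
  have "3 * (a ^ 2 + b ^ 2 + c ^ 2) * k \<le> (a + b + c) ^ 2 * k"
    unfolding sum_card_block_classes_squared by simp
  with \<open>k \<ge> 1\<close> square_sum_lt_three_sum_squares[OF assms(4)] show False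
    by simp
qed

end
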